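(* Let $H:\mathbb{R}^N\times\mathbb{R}^N\to\mathbb{R}$ be a skew-symmetric, finite, convex-concave function satisfying $|H(x_1,y_1)-H(x_2,y_2)|\le\Lambda\|x_1-x_2\|+\Lambda\|y_1-y_2\|$ for some $\Lambda>0$. Let $A\subset\mathbb{R}^N$ be a closed ball and $B\subset\mathbb{R}^N$ a compact set with non-empty interior, and fix $u\in\mathbb{R}^N$. Then there is a dense subset $A'\subset A$ such that for each $x\in A'$ there is a dense subset $B_{x,u}$ of $B$ with $$\nabla_1H(x,y)(u)=-\nabla_1H(x,y)(-u)\quad\text{for all }y\in B_{x,u}.$$
   Context: $\nabla_1H(x,y)(u)=\lim_{\lambda\to0^+}\frac{H(x+\lambda u,y)-H(x,y)}{\lambda}$ denotes the one-sided directional derivative in the first variable, which exists since $H$ is convex in its first variable. Skew-symmetric means $H(x,y)=-H(y,x)$; convex-concave means convex in the first variable and concave in the second. *)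

theory Defs
  imports "HOL-Analysis.Analysis"
begin

definition dir_deriv1 :: "('a::real_normed_vector \<Rightarrow> 'a \<Rightarrow> real) \<Rightarrow> 'a \<Rightarrow> 'a \<Rightarrow> 'a \<Rightarrow> real" where
  "dir_deriv1 H x y u = Lim (at_right (0::real)) (\<lambda>t. (H (x + t *\<^sub>R u) y - H x y) / t)"

end

theory Submission
  imports Defs
begin

text \<open>
  Restricted to the line
  s \<mapsto> x + s u, the function f(s) = H(x + s u, y) is a convex real function, so its right
  derivative is the infimum and its left derivative the supremum of the corresponding difference
  quotients, and the symmetry dir_deriv1 H x y u = - dir_deriv1 H x y (-u) says exactly that
  both one-sided derivatives agree at s = 0.  Since the right derivative at s is at most the left derivative at
  any t > s, the intervals between the two one-sided derivatives are disjoint, hence on every line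
  in direction u the symmetry fails only for countably many parameters.

  Fixing a countable dense subset D of B, the set of points x where the symmetry fails for some
  y \<in> D therefore meets every line in direction u in a countable set.  Such a set has dense
  complement (an open interval of parameters is uncountable), so its complement inside the ball
  is the required dense set A', and D serves as B_{x,u} for every x \<in> A'.
\<close>

subsection \<open>One-sided derivatives of convex functions of one real variable\<close>

text \<open>The difference quotient of a convex function is monotone in the increment; this is the
  three-chord inequality, with a case split on the signs of the two increments.\<close>
lemma convex_difference_quotient_mono:
  fixes f :: "real \<Rightarrow> real"
  assumes f: "convex_on UNIV f" and "h \<noteq> 0" "k \<noteq> 0" "h \<le> k"
  shows "(f (t + h) - f t) / h \<le> (f (t + k) - f t) / k"
proof (cases "h = k")
  case False
  then have hk: "h < k" using assms by simp
  consider "h < 0" "0 < k" | "0 < h" | "k < 0" using assms hk by linarith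
  then show ?thesis
  proof cases
    case 1
    from convex_on_slope_le[OF f, of "t + h" "t + k" t] 1
    have "(f (t + h) - f t) / ((t + h) - t) \<le> (f t - f (t + k)) / (t - (t + k))"
      by (meson UNIV_I less_add_same_cancel1 add_less_same_cancel1 order_trans)
    then show ?thesis by (simp add: minus_divide_left)
  next
    case 2
    from convex_on_slope_le(1)[OF f, of t "t + k" "t + h"] 2 hk
    have "(f t - f (t + h)) / (t - (t + h)) \<le> (f t - f (t + k)) / (t - (t + k))" by simp
    then show ?thesis by (smt (verit) minus_divide_divide)
  next
    case 3
    from convex_on_slope_le(2)[OF f, of "t + h" t "t + k"] 3 hk
    show ?thesis by simp
  qed
qed simp

definition right_deriv :: "(real \<Rightarrow> real) \<Rightarrow> real \<Rightarrow> real" where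
  "right_deriv f t = Inf ((\<lambda>h. (f (t + h) - f t) / h) ` {0<..})"

definition left_deriv :: "(real \<Rightarrow> real) \<Rightarrow> real \<Rightarrow> real" where
  "left_deriv f t = Sup ((\<lambda>h. (f t - f (t - h)) / h) ` {0<..})"

lemma backward_quotient_eq:
  fixes f :: "real \<Rightarrow> real"
  shows "(f t - f (t - h)) / h = - ((f (t - h) - f t) / h)"
  by (simp add: minus_divide_left)

context
  fixes f :: "real \<Rightarrow> real"
  assumes f: "convex_on UNIV f"
begin

lemma backward_quotient_le_forward_quotient:
  assumes "0 < h" "0 < k"
  shows "(f t - f (t - h)) / h \<le> (f (t + k) - f t) / k"
  using convex_difference_quotient_mono[OF f, of "- h" k t] assms
  by (simp add: backward_quotient_eq)

lemma backward_quotient_antimono: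
  assumes "0 < h" "h \<le> k"
  shows "(f t - f (t - k)) / k \<le> (f t - f (t - h)) / h"
  using convex_difference_quotient_mono[OF f, of "- k" "- h" t] assms
  by (simp add: backward_quotient_eq)

lemma forward_quotients_bdd_below: "bdd_below ((\<lambda>h. (f (t + h) - f t) / h) ` {0<..})"
proof (rule bdd_belowI2)
  fix k :: real assume "k \<in> {0<..}"
  then show "f t - f (t - 1) \<le> (f (t + k) - f t) / k"
    using backward_quotient_le_forward_quotient[of 1 k t] by simp
qed

lemma backward_quotients_bdd_above: "bdd_above ((\<lambda>h. (f t - f (t - h)) / h) ` {0<..})"
proof (rule bdd_aboveI2)
  fix h :: real assume "h \<in> {0<..}"
  then show "(f t - f (t - h)) / h \<le> f (t + 1) - f t"
    using backward_quotient_le_forward_quotient[of h 1 t] by simp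
qed

lemma right_deriv_le_forward_quotient:
  assumes "0 < h"
  shows "right_deriv f t \<le> (f (t + h) - f t) / h"
  unfolding right_deriv_def using assms by (intro cInf_lower forward_quotients_bdd_below) simp

lemma backward_quotient_le_left_deriv:
  assumes "0 < h"
  shows "(f t - f (t - h)) / h \<le> left_deriv f t"
  unfolding left_deriv_def using assms by (intro cSup_upper backward_quotients_bdd_above) simp

text \<open>By monotonicity of the quotients, the one-sided derivatives are their limits.\<close>
lemma tendsto_right_deriv:
  "((\<lambda>h. (f (t + h) - f t) / h) \<longlongrightarrow> right_deriv f t) (at_right 0)"
proof (rule order_tendstoI)
  fix a assume a: "a < right_deriv f t"
  have "a < (f (t + h) - f t) / h" if "0 < h" for h
    using a right_deriv_le_forward_quotient[OF that, where t = t] by linarith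
  then show "\<forall>\<^sub>F h in at_right 0. a < (f (t + h) - f t) / h"
    by (rule eventually_mono[OF eventually_at_right_less])
next
  fix a assume "right_deriv f t < a"
  then obtain h0 where h0: "h0 > 0" "(f (t + h0) - f t) / h0 < a"
    unfolding right_deriv_def by (auto simp: cInf_less_iff[OF _ forward_quotients_bdd_below])
  have "(f (t + h) - f t) / h < a" if "h \<in> {0<..<h0}" for h
    using convex_difference_quotient_mono[OF f, of h h0 t] that h0 by auto
  then show "\<forall>\<^sub>F h in at_right 0. (f (t + h) - f t) / h < a"
    by (rule eventually_mono[OF eventually_at_right_real[OF h0(1)]])
qed

lemma tendsto_left_deriv:
  "((\<lambda>h. (f t - f (t - h)) / h) \<longlongrightarrow> left_deriv f t) (at_right 0)"
proof (rule order_tendstoI)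
  fix a assume a: "left_deriv f t < a"
  have "(f t - f (t - h)) / h < a" if "0 < h" for h
    using a backward_quotient_le_left_deriv[OF that, where t = t] by linarith
  then show "\<forall>\<^sub>F h in at_right 0. (f t - f (t - h)) / h < a"
    by (rule eventually_mono[OF eventually_at_right_less])
next
  fix a assume "a < left_deriv f t"
  then obtain h0 where h0: "h0 > 0" "a < (f t - f (t - h0)) / h0"
    unfolding left_deriv_def by (auto simp: less_cSup_iff[OF _ backward_quotients_bdd_above])
  have "a < (f t - f (t - h)) / h" if "h \<in> {0<..<h0}" for h
    using backward_quotient_antimono[of h h0 t] that h0 by auto
  then show "\<forall>\<^sub>F h in at_right 0. a < (f t - f (t - h)) / h"
    by (rule eventually_mono[OF eventually_at_right_real[OF h0(1)]])
qed

lemma left_deriv_le_right_deriv: "left_deriv f t \<le> right_deriv f t"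
  unfolding left_deriv_def right_deriv_def
  by (intro cSup_least cInf_greatest) (auto intro: backward_quotient_le_forward_quotient)

text \<open>One-sided derivatives increase: the right derivative at s is below the left derivative at
  any later point t, both being bounded by the chord slope over [s, t].\<close>
lemma right_deriv_le_left_deriv:
  assumes "s < t"
  shows "right_deriv f s \<le> left_deriv f t"
proof -
  have "right_deriv f s \<le> (f (s + (t - s)) - f s) / (t - s)"
    using assms by (intro right_deriv_le_forward_quotient) simp
  also have "\<dots> = (f t - f (t - (t - s))) / (t - s)" by simp
  also have "\<dots> \<le> left_deriv f t"
    using assms by (intro backward_quotient_le_left_deriv) simp
  finally show ?thesis .
qed

end

text \<open>If the intervals [L t, R t] are ordered along the line, then only countably many of them
  are non-degenerate: each such interval contains its own rational number.\<close>
lemma countable_nondegenerate_ordered_intervals: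
  fixes L R :: "real \<Rightarrow> real"
  assumes LR: "\<And>t. L t \<le> R t" and RL: "\<And>s t. s < t \<Longrightarrow> R s \<le> L t"
  shows "countable {t. R t \<noteq> L t}"
proof -
  define S where "S = {t. R t \<noteq> L t}"
  have "\<forall>t\<in>S. \<exists>q. q \<in> \<rat> \<and> L t < q \<and> q < R t"
  proof
    fix t assume "t \<in> S"
    then have "L t < R t" using LR[of t] unfolding S_def by simp
    then show "\<exists>q. q \<in> \<rat> \<and> L t < q \<and> q < R t" using Rats_dense_in_real by blast
  qed
  from bchoice[OF this] obtain q where q: "\<forall>t\<in>S. q t \<in> \<rat> \<and> L t < q t \<and> q t < R t"
    by blast
  have "strict_mono_on S q"
  proof (rule strict_mono_onI)
    fix s t assume "s \<in> S" "t \<in> S" "s < t"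
    then have "q s < R s" "R s \<le> L t" "L t < q t" using q RL by auto
    then show "q s < q t" by linarith
  qed
  then have "inj_on q S" by (rule strict_mono_on_imp_inj_on)
  moreover have "countable (q ` S)"
    using q by (intro countable_subset[OF _ countable_rat]) auto
  ultimately show ?thesis unfolding S_def by (blast intro: countable_image_inj_on)
qed

corollary countable_left_deriv_neq_right_deriv:
  fixes f :: "real \<Rightarrow> real"
  assumes "convex_on UNIV f"
  shows "countable {t. right_deriv f t \<noteq> left_deriv f t}"
  using left_deriv_le_right_deriv[OF assms] right_deriv_le_left_deriv[OF assms]
  by (rule countable_nondegenerate_ordered_intervals)

subsection \<open>Directional derivatives along a line\<close>

lemma convex_on_line:
  fixes F :: "'a::real_vector \<Rightarrow> real"
  assumes F: "convex_on UNIV F"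
  shows "convex_on UNIV (\<lambda>s. F (p + s *\<^sub>R u))"
proof (rule convex_onI)
  fix s1 s2 t :: real assume t: "0 < t" "t < 1"
  have "p + ((1 - t) * s1 + t * s2) *\<^sub>R u = (1 - t) *\<^sub>R (p + s1 *\<^sub>R u) + t *\<^sub>R (p + s2 *\<^sub>R u)"
    by (simp add: algebra_simps)
  then show "F (p + ((1 - t) *\<^sub>R s1 + t *\<^sub>R s2) *\<^sub>R u)
      \<le> (1 - t) * F (p + s1 *\<^sub>R u) + t * F (p + s2 *\<^sub>R u)"
    using convex_onD[OF F, of t] t by simp
qed simp

lemma dir_deriv1_along_line:
  fixes H :: "'a::real_normed_vector \<Rightarrow> 'a \<Rightarrow> real" and p u y :: 'a
  assumes "convex_on UNIV (\<lambda>x. H x y)"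
  defines "f \<equiv> \<lambda>s. H (p + s *\<^sub>R u) y"
  shows "dir_deriv1 H (p + s *\<^sub>R u) y u = right_deriv f s"
    and "dir_deriv1 H (p + s *\<^sub>R u) y (- u) = - left_deriv f s"
proof -
  have f: "convex_on UNIV f" unfolding f_def using assms(1) by (rule convex_on_line)
  have forward: "H (p + s *\<^sub>R u + h *\<^sub>R u) y = f (s + h)"
    and backward: "H (p + s *\<^sub>R u + h *\<^sub>R - u) y = f (s - h)" for h
    unfolding f_def by (simp_all add: algebra_simps)
  show "dir_deriv1 H (p + s *\<^sub>R u) y u = right_deriv f s"
    unfolding dir_deriv1_def forward
    using tendsto_Lim[OF trivial_limit_at_right_real tendsto_right_deriv[OF f]]
    by (simp add: f_def)
  have "((\<lambda>h. (f (s - h) - f s) / h) \<longlongrightarrow> - left_deriv f s) (at_right 0)"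
    using tendsto_minus[OF tendsto_left_deriv[OF f, of s]] by (simp add: minus_divide_left)
  then show "dir_deriv1 H (p + s *\<^sub>R u) y (- u) = - left_deriv f s"
    unfolding dir_deriv1_def backward
    using tendsto_Lim[OF trivial_limit_at_right_real] by (simp add: f_def)
qed

lemma countable_dir_deriv1_asymmetric_on_line:
  fixes H :: "'a::real_normed_vector \<Rightarrow> 'a \<Rightarrow> real"
  assumes H: "convex_on UNIV (\<lambda>x. H x y)"
  shows "countable {s::real. dir_deriv1 H (p + s *\<^sub>R u) y u \<noteq> - dir_deriv1 H (p + s *\<^sub>R u) y (- u)}"
  using countable_left_deriv_neq_right_deriv[OF convex_on_line[OF H]]
  by (simp add: dir_deriv1_along_line[where H = H and y = y, OF H])

subsection \<open>Sets that are countable on every line have dense complement\<close>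

text \<open>If a set meets every line in direction u in countably many parameters, its complement is
  dense: near any point z, uncountably many points z + s u with small s > 0 are available.\<close>
lemma dense_complement_if_countable_on_lines:
  fixes Bad :: "'a::real_normed_vector set" and u :: 'a
  assumes countable: "\<And>p. countable {s::real. p + s *\<^sub>R u \<in> Bad}"
  shows "closure (- Bad) = UNIV"
proof -
  have "\<exists>x\<in>- Bad. dist x z < e" if e: "e > 0" for z and e :: real
  proof -
    define d where "d = e / (norm u + 1)"
    have "d > 0" unfolding d_def using e by (simp add: add_nonneg_pos)
    then have "uncountable {0<..<d}" by (simp add: uncountable_open_interval)
    then obtain s where s: "s \<in> {0<..<d}" "z + s *\<^sub>R u \<notin> Bad"
      using countable[of z] by (metis (mono_tags, lifting) countable_subset mem_Collect_eq subsetI)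
    have "dist (z + s *\<^sub>R u) z = s * norm u" using s(1) by (simp add: dist_norm)
    also have "\<dots> \<le> s * (norm u + 1)" using s(1) by simp
    also have "\<dots> < e"
      using s(1) unfolding d_def by (simp add: add_nonneg_pos pos_less_divide_eq)
    finally show ?thesis using s(2) by blast
  qed
  then show ?thesis by (auto simp: closure_approachable)
qed

lemma cball_subset_closure_diff:
  fixes Bad :: "'a::real_normed_vector set" and c :: 'a and r :: real
  assumes dense: "closure (- Bad) = UNIV" and r: "r > 0"
  shows "cball c r \<subseteq> closure (cball c r - Bad)"
proof -
  have ball: "ball c r \<subseteq> closure (ball c r \<inter> - Bad)"
    using open_Int_closure_subset[of "ball c r" "- Bad"] dense by simp
  have "cball c r = closure (ball c r)" using r by simp
  also have "\<dots> \<subseteq> closure (ball c r \<inter> - Bad)"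
    using ball by (metis closure_closure closure_mono)
  also have "\<dots> \<subseteq> closure (cball c r - Bad)" by (intro closure_mono) auto
  finally show ?thesis .
qed

text \<open>Only the convexity of H in its first variable and the positivity of r enter the proof; the
  set A' consists of the points of the ball at which the symmetry holds for every y in a fixed
  countable dense subset of B.\<close>
theorem proposition3p2:
  fixes H :: "'a::euclidean_space \<Rightarrow> 'a \<Rightarrow> real"
    and \<Lambda> r :: real and c u :: 'a and B :: "'a set"
  assumes skew: "\<And>x y. H x y = - H y x"
    and convex: "\<And>y. convex_on UNIV (\<lambda>x. H x y)"
    and concave: "\<And>x. concave_on UNIV (\<lambda>y. H x y)"
    and Lpos: "\<Lambda> > 0"
    and lip: "\<And>x1 y1 x2 y2. \<bar>H x1 y1 - H x2 y2\<bar> \<le> \<Lambda> * norm (x1 - x2) + \<Lambda> * norm (y1 - y2)"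
    and rpos: "r > 0"
    and Bcpt: "compact B"
    and Bint: "interior B \<noteq> {}"
  shows "\<exists>A'. A' \<subseteq> cball c r \<and> cball c r \<subseteq> closure A' \<and>
           (\<forall>x\<in>A'. \<exists>Bxu. Bxu \<subseteq> B \<and> B \<subseteq> closure Bxu \<and>
              (\<forall>y\<in>Bxu. dir_deriv1 H x y u = - dir_deriv1 H x y (- u)))"
proof -
  define Good where "Good x y \<longleftrightarrow> dir_deriv1 H x y u = - dir_deriv1 H x y (- u)" for x y
  obtain D where D: "countable D" "D \<subseteq> B" "B \<subseteq> closure D" using separable by blast
  define Bad where "Bad = (\<Union>y\<in>D. {x. \<not> Good x y})"
  have "countable {s::real. p + s *\<^sub>R u \<in> Bad}" for p
  proof -
    have "{s. p + s *\<^sub>R u \<in> Bad} = (\<Union>y\<in>D. {s. \<not> Good (p + s *\<^sub>R u) y})"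
      unfolding Bad_def by auto
    then show ?thesis
      using D(1) countable_dir_deriv1_asymmetric_on_line[OF convex] unfolding Good_def by auto
  qed
  then have "cball c r \<subseteq> closure (cball c r - Bad)"
    using rpos by (intro cball_subset_closure_diff dense_complement_if_countable_on_lines)
  moreover have "\<forall>x \<in> cball c r - Bad. \<forall>y\<in>D. Good x y" unfolding Bad_def by blast
  ultimately show ?thesis using D unfolding Good_def by blast
qed

end
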